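(* Let $X$ be a reflexive real Banach space, $Y$ a real Banach space, $\Omega$ a measure space, $Z:=L^2(\Omega)$, and $e:Y\to Z$ a linear continuous dense embedding. Let $f:X\to\mathbb{R}$ and $g:X\to Y$ be continuously Fréchet differentiable, and assume $f$ and $x\mapsto\|g_+(x)\|_Z$ are weakly lower semicontinuous. Then every local solution $\bar x$ of the problem $\min f(x)$ s.t. $g(x)\le 0$ satisfies the AKKT conditions, i.e. there exist sequences $x^k\to\bar x$ in $X$ and $(\lambda^k)\subset K_Y^+$ such that $f'(x^k)+g'(x^k)^*\lambda^k\to 0$ in $X^*$ and $\langle\lambda^k,g_-(x^k)\rangle\to 0$.
   Context: The order on $Y$ is induced by $Z$: $K_Y:=\{y\in Y: e(y)\ge 0 \text{ a.e.}\}$ and $y\le 0$ means $-y\in K_Y$. $K_Y^+:=\{\mu\in Y^*:\langle\mu,y\rangle\ge 0\ \forall y\in K_Y\}$ is the dual cone, where $\langle\cdot,\cdot\rangle$ is the duality pairing between $Y^*$ and $Y$; $Z\cong Z^*$ is regarded as a subspace of $Y^*$ via $e^*$. For $z\in Z$, $z_+:=\max\{z,0\}$, $z_-:=\max\{-z,0\}$ pointwise, and $g_\pm(x):=(e(g(x)))_\pm$. *)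

theory Defs
  imports "HOL-Analysis.Analysis" "HOL-Probability.Probability"
begin

definition reflexive_space :: "'a::real_normed_vector itself \<Rightarrow> bool" where
  "reflexive_space _ \<longleftrightarrow>
     (\<forall>\<Phi> :: ('a \<Rightarrow>\<^sub>L real) \<Rightarrow>\<^sub>L real. \<exists>x::'a. \<forall>\<phi>. blinfun_apply \<Phi> \<phi> = blinfun_apply \<phi> x)"

definition weak_topology :: "'a::real_normed_vector topology" where
  "weak_topology = topology_generated_by
     {blinfun_apply \<phi> -` U | (\<phi> :: 'a \<Rightarrow>\<^sub>L real) U. open U}"

definition weakly_lsc :: "('a::real_normed_vector \<Rightarrow> real) \<Rightarrow> bool" where
  "weakly_lsc f \<longleftrightarrow> (\<forall>c. closedin weak_topology {x. f x \<le> c})"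

definition sq_int :: "'w measure \<Rightarrow> ('w \<Rightarrow> real) \<Rightarrow> bool" where
  "sq_int M h \<longleftrightarrow> h \<in> borel_measurable M \<and> integrable M (\<lambda>w. (h w)^2)"

definition L2norm :: "'w measure \<Rightarrow> ('w \<Rightarrow> real) \<Rightarrow> real" where
  "L2norm M h = sqrt (LINT w|M. (h w)^2)"

definition dense_L2_embedding :: "'w measure \<Rightarrow> ('y::real_normed_vector \<Rightarrow> 'w \<Rightarrow> real) \<Rightarrow> bool" where
  "dense_L2_embedding M e \<longleftrightarrow>
     (\<forall>y. sq_int M (e y)) \<and>
     (\<forall>y1 y2. AE w in M. e (y1 + y2) w = e y1 w + e y2 w) \<and>
     (\<forall>c y. AE w in M. e (c *\<^sub>R y) w = c * e y w) \<and>
     (\<exists>C. \<forall>y. L2norm M (e y) \<le> C * norm y) \<and>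
     (\<forall>y. (AE w in M. e y w = 0) \<longrightarrow> y = 0) \<and>
     (\<forall>h. sq_int M h \<longrightarrow> (\<forall>\<epsilon>>0. \<exists>y. L2norm M (\<lambda>w. e y w - h w) < \<epsilon>))"

definition cone_KY :: "'w measure \<Rightarrow> ('y \<Rightarrow> 'w \<Rightarrow> real) \<Rightarrow> 'y set" where
  "cone_KY M e = {y. AE w in M. e y w \<ge> 0}"

definition dual_cone_KY :: "'w measure \<Rightarrow> ('y::real_normed_vector \<Rightarrow> 'w \<Rightarrow> real) \<Rightarrow> ('y \<Rightarrow>\<^sub>L real) set" where
  "dual_cone_KY M e = {\<mu>. \<forall>y \<in> cone_KY M e. blinfun_apply \<mu> y \<ge> 0}"

definition pos_part :: "('w \<Rightarrow> real) \<Rightarrow> 'w \<Rightarrow> real" where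
  "pos_part z = (\<lambda>w. max (z w) 0)"

definition neg_part :: "('w \<Rightarrow> real) \<Rightarrow> 'w \<Rightarrow> real" where
  "neg_part z = (\<lambda>w. max (- z w) 0)"

definition local_solution ::
  "'w measure \<Rightarrow> ('y::real_normed_vector \<Rightarrow> 'w \<Rightarrow> real) \<Rightarrow> ('x::real_normed_vector \<Rightarrow> real) \<Rightarrow> ('x \<Rightarrow> 'y) \<Rightarrow> 'x \<Rightarrow> bool" where
  "local_solution M e f g xb \<longleftrightarrow>
     - g xb \<in> cone_KY M e \<and>
     (\<exists>\<epsilon>>0. \<forall>x. - g x \<in> cone_KY M e \<and> norm (x - xb) < \<epsilon> \<longrightarrow> f xb \<le> f x)"

end

theory Submission
  imports Defs
begin

text \<open>
  Penalty method. For \<open>\<rho>\<^sub>k = k + 1\<close> minimize \<open>f x + \<rho>\<^sub>k/2 \<parallel>g\<^sub>+(x)\<parallel>\<^sup>2 + \<parallel>x - xb\<parallel>\<^sup>2/2\<close> over a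
  closed ball around \<open>xb\<close>: the ball is weakly compact by reflexivity (Banach--Alaoglu in \<open>X**\<close>),
  and the objective is weakly lower semicontinuous, so minimizers \<open>x\<^sup>k\<close> exist. Their penalty terms
  are bounded, so weak cluster points are feasible, and the local optimality of \<open>xb\<close> together
  with the proximal term forces \<open>x\<^sup>k \<longrightarrow> xb\<close>. Eventually \<open>x\<^sup>k\<close> is interior to the ball.
  As \<open>s \<mapsto> (s\<^sub>+)\<^sup>2/2\<close> has a 1-Lipschitz derivative and the proximal term grows at most like
  \<open>\<parallel>x\<^sup>k - xb\<parallel> \<parallel>y - x\<^sup>k\<parallel> + \<parallel>y - x\<^sup>k\<parallel>\<^sup>2/2\<close>, local minimality yields
  \<open>\<parallel>f'(x\<^sup>k) + g'(x\<^sup>k)\<^sup>* \<lambda>\<^sup>k\<parallel> \<le> \<parallel>x\<^sup>k - xb\<parallel>\<close> for \<open>\<lambda>\<^sup>k = \<rho>\<^sub>k e\<^sup>* g\<^sub>+(x\<^sup>k) \<in> K\<^sub>Y\<^sup>+\<close>, while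
  \<open>\<langle>\<lambda>\<^sup>k, g\<^sub>-(x\<^sup>k)\<rangle> = 0\<close> because \<open>g\<^sub>+ g\<^sub>- = 0\<close>.
\<close>

section \<open>Hahn--Banach\<close>

text \<open>\<open>G\<close> is the graph of a linear functional on a subspace (single-valued because of the bound).\<close>
definition norm_dominated_graph :: "('a::real_normed_vector \<times> real) set \<Rightarrow> bool" where
  "norm_dominated_graph G \<longleftrightarrow> (0, 0) \<in> G \<and>
     (\<forall>u a v b. (u, a) \<in> G \<longrightarrow> (v, b) \<in> G \<longrightarrow> (u + v, a + b) \<in> G) \<and>
     (\<forall>u a r. (u, a) \<in> G \<longrightarrow> (r *\<^sub>R u, r * a) \<in> G) \<and>
     (\<forall>u a. (u, a) \<in> G \<longrightarrow> a \<le> norm u)"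

lemma norm_dominated_graphD:
  assumes "norm_dominated_graph G"
  shows norm_dominated_graph_zero: "(0, 0) \<in> G"
    and norm_dominated_graph_add: "(u, a) \<in> G \<Longrightarrow> (v, b) \<in> G \<Longrightarrow> (u + v, a + b) \<in> G"
    and norm_dominated_graph_scaleR: "(u, a) \<in> G \<Longrightarrow> (r *\<^sub>R u, r * a) \<in> G"
    and norm_dominated_graph_le: "(u, a) \<in> G \<Longrightarrow> a \<le> norm u"
  using assms unfolding norm_dominated_graph_def by blast+

lemma norm_dominated_graph_unique:
  assumes G: "norm_dominated_graph G" and "(u, a) \<in> G" "(u, b) \<in> G"
  shows "a = b"
proof -
  have "(u + (-1) *\<^sub>R u, a + (-1) * b) \<in> G" "(u + (-1) *\<^sub>R u, b + (-1) * a) \<in> G"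
    using assms by (blast intro: norm_dominated_graph_add norm_dominated_graph_scaleR)+
  from this[THEN norm_dominated_graph_le[OF G]] show ?thesis
    by simp
qed

lemma norm_dominated_graph_line: "norm_dominated_graph (range (\<lambda>t. (t *\<^sub>R x, t * norm x)))"
  unfolding norm_dominated_graph_def
proof (intro conjI allI impI)
  show "(0, 0) \<in> range (\<lambda>t. (t *\<^sub>R x, t * norm x))"
    by (rule range_eqI[of _ _ 0]) simp
next
  fix u a v b
  assume "(u, a) \<in> range (\<lambda>t. (t *\<^sub>R x, t * norm x))" "(v, b) \<in> range (\<lambda>t. (t *\<^sub>R x, t * norm x))"
  then obtain s t where "u = s *\<^sub>R x" "a = s * norm x" "v = t *\<^sub>R x" "b = t * norm x"
    by auto
  then show "(u + v, a + b) \<in> range (\<lambda>t. (t *\<^sub>R x, t * norm x))"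
    by (intro range_eqI[of _ _ "s + t"]) (simp add: algebra_simps)
next
  fix u a r
  assume "(u, a) \<in> range (\<lambda>t. (t *\<^sub>R x, t * norm x))"
  then obtain s where "u = s *\<^sub>R x" "a = s * norm x"
    by auto
  then show "(r *\<^sub>R u, r * a) \<in> range (\<lambda>t. (t *\<^sub>R x, t * norm x))"
    by (intro range_eqI[of _ _ "r * s"]) simp
next
  fix u a
  assume "(u, a) \<in> range (\<lambda>t. (t *\<^sub>R x, t * norm x))"
  then show "a \<le> norm u"
    using mult_right_mono[OF abs_ge_self norm_ge_zero] by auto
qed

lemma norm_dominated_graph_Union:
  assumes "C \<noteq> {}" "\<And>G. G \<in> C \<Longrightarrow> norm_dominated_graph G"
    and chain: "\<And>G H. G \<in> C \<Longrightarrow> H \<in> C \<Longrightarrow> G \<subseteq> H \<or> H \<subseteq> G"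
  shows "norm_dominated_graph (\<Union>C)"
  unfolding norm_dominated_graph_def
proof (intro conjI allI impI)
  show "(0, 0) \<in> \<Union>C"
    using assms(1,2) norm_dominated_graph_zero by blast
next
  fix u a v b
  assume "(u, a) \<in> \<Union>C" "(v, b) \<in> \<Union>C"
  then obtain G H where "G \<in> C" "H \<in> C" "(u, a) \<in> G" "(v, b) \<in> H"
    by blast
  with chain[of G H] show "(u + v, a + b) \<in> \<Union>C"
    using assms(2) norm_dominated_graph_add by blast
qed (use assms(2) norm_dominated_graph_scaleR norm_dominated_graph_le in blast)+

lemma norm_dominated_graph_extension_bounds:
  assumes G: "norm_dominated_graph G"
  obtains c where "\<And>u a. (u, a) \<in> G \<Longrightarrow> a - norm (u - y) \<le> c"
    and "\<And>u a. (u, a) \<in> G \<Longrightarrow> c \<le> norm (u + y) - a"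
proof -
  have squeeze: "a - norm (u - y) \<le> norm (v + y) - b" if "(u, a) \<in> G" "(v, b) \<in> G" for u a v b
  proof -
    have "a + b \<le> norm ((u - y) + (v + y))"
      using norm_dominated_graph_le[OF G norm_dominated_graph_add[OF G that]] by simp
    also have "\<dots> \<le> norm (u - y) + norm (v + y)"
      by (rule norm_triangle_ineq)
    finally show ?thesis
      by simp
  qed
  define S where "S = {a - norm (u - y) | u a. (u, a) \<in> G}"
  have "S \<noteq> {}" "bdd_above S"
    using squeeze norm_dominated_graph_zero[OF G] unfolding S_def bdd_above_def by fastforce+
  show ?thesis
  proof (rule that[of "Sup S"])
    show "a - norm (u - y) \<le> Sup S" if "(u, a) \<in> G" for u a
      using that \<open>bdd_above S\<close> by (intro cSup_upper) (auto simp: S_def)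
    show "Sup S \<le> norm (u + y) - a" if "(u, a) \<in> G" for u a
      using that squeeze \<open>S \<noteq> {}\<close> by (intro cSup_least) (auto simp: S_def)
  qed
qed

text \<open>Rescaling \<open>(u, a)\<close> by \<open>1 / \<bar>t\<bar>\<close> reduces the claim to the two bounds on \<open>c\<close>.\<close>
lemma norm_dominated_graph_extension_le:
  assumes G: "norm_dominated_graph G" and "(u, a) \<in> G"
    and lower: "\<And>u a. (u, a) \<in> G \<Longrightarrow> a - norm (u - y) \<le> c"
    and upper: "\<And>u a. (u, a) \<in> G \<Longrightarrow> c \<le> norm (u + y) - a"
  shows "a + t * c \<le> norm (u + t *\<^sub>R y)"
proof -
  have rescale: "s * norm (inverse s *\<^sub>R u + w) = norm (u + s *\<^sub>R w)" if "s > 0" for s w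
  proof -
    have "s * norm (inverse s *\<^sub>R u + w) = norm (s *\<^sub>R (inverse s *\<^sub>R u + w))"
      using that by simp
    also have "s *\<^sub>R (inverse s *\<^sub>R u + w) = u + s *\<^sub>R w"
      using that by (simp add: scaleR_add_right)
    finally show ?thesis .
  qed
  have scaled: "(inverse s *\<^sub>R u, inverse s * a) \<in> G" for s
    using norm_dominated_graph_scaleR[OF G \<open>(u, a) \<in> G\<close>] .
  consider "t < 0" | "t = 0" | "t > 0"
    by linarith
  then show ?thesis
  proof cases
    case 1
    then have "- t * (inverse (- t) * a - norm (inverse (- t) *\<^sub>R u + (- y))) \<le> - t * c"
      using lower[OF scaled[of "- t"]] by (intro mult_left_mono) auto
    then show ?thesis
      using 1 rescale[of "- t" "- y"] by (simp add: right_diff_distrib mult.assoc[symmetric])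
  next
    case 2
    then show ?thesis
      using norm_dominated_graph_le[OF G \<open>(u, a) \<in> G\<close>] by simp
  next
    case 3
    then have "t * c \<le> t * (norm (inverse t *\<^sub>R u + y) - inverse t * a)"
      using upper[OF scaled[of t]] by (intro mult_left_mono) auto
    then show ?thesis
      using 3 rescale[of t y] by (simp add: right_diff_distrib mult.assoc[symmetric])
  qed
qed

lemma norm_dominated_graph_extend:
  assumes G: "norm_dominated_graph G"
  shows "\<exists>G'. norm_dominated_graph G' \<and> G \<subseteq> G' \<and> (\<exists>c. (y, c) \<in> G')"
proof -
  obtain c where lower: "\<And>u a. (u, a) \<in> G \<Longrightarrow> a - norm (u - y) \<le> c"
    and upper: "\<And>u a. (u, a) \<in> G \<Longrightarrow> c \<le> norm (u + y) - a"
    using norm_dominated_graph_extension_bounds[OF G, where y = y] by blast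
  define G' where "G' = {(u + t *\<^sub>R y, a + t * c) | u a t. (u, a) \<in> G}"
  have "norm_dominated_graph G'"
    unfolding norm_dominated_graph_def
  proof (intro conjI allI impI)
    show "(0, 0) \<in> G'"
      unfolding G'_def using norm_dominated_graph_zero[OF G] by force
  next
    fix u a v b
    assume "(u, a) \<in> G'" "(v, b) \<in> G'"
    then obtain u1 a1 t1 u2 a2 t2 where "(u1, a1) \<in> G" "(u2, a2) \<in> G"
      "u = u1 + t1 *\<^sub>R y" "a = a1 + t1 * c" "v = u2 + t2 *\<^sub>R y" "b = a2 + t2 * c"
      unfolding G'_def by blast
    then show "(u + v, a + b) \<in> G'"
      unfolding G'_def using norm_dominated_graph_add[OF G]
      by (intro CollectI exI[of _ "u1 + u2"] exI[of _ "a1 + a2"] exI[of _ "t1 + t2"])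
        (simp add: algebra_simps)
  next
    fix u a r
    assume "(u, a) \<in> G'"
    then obtain u1 a1 t where "(u1, a1) \<in> G" "u = u1 + t *\<^sub>R y" "a = a1 + t * c"
      unfolding G'_def by blast
    then show "(r *\<^sub>R u, r * a) \<in> G'"
      unfolding G'_def using norm_dominated_graph_scaleR[OF G]
      by (intro CollectI exI[of _ "r *\<^sub>R u1"] exI[of _ "r * a1"] exI[of _ "r * t"])
        (simp add: algebra_simps)
  next
    fix u a
    assume "(u, a) \<in> G'"
    then show "a \<le> norm u"
      unfolding G'_def using norm_dominated_graph_extension_le[OF G _ lower upper] by blast
  qed
  moreover have "G \<subseteq> G'"
    unfolding G'_def by (force intro: exI[of _ 0])
  moreover have "(y, c) \<in> G'"
    unfolding G'_def using norm_dominated_graph_zero[OF G] by (force intro: exI[of _ 1])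
  ultimately show ?thesis
    by blast
qed

lemma norming_functional_exists:
  fixes x :: "'a::real_normed_vector"
  shows "\<exists>\<phi>::'a \<Rightarrow>\<^sub>L real. norm \<phi> \<le> 1 \<and> blinfun_apply \<phi> x = norm x"
proof -
  define A where "A = {G. norm_dominated_graph G \<and> (x, norm x) \<in> G}"
  have "range (\<lambda>t. (t *\<^sub>R x, t * norm x)) \<in> A"
    unfolding A_def using norm_dominated_graph_line by (force intro: range_eqI[of _ _ 1])
  then have "\<exists>G\<in>A. \<forall>H\<in>A. G \<subseteq> H \<longrightarrow> H = G"
    by (intro subset_Zorn_nonempty) (auto simp: A_def subset_chain_def intro!: norm_dominated_graph_Union)
  then obtain G where G: "norm_dominated_graph G" "(x, norm x) \<in> G"
    and maximal: "\<And>H. norm_dominated_graph H \<Longrightarrow> G \<subseteq> H \<Longrightarrow> H = G"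
    unfolding A_def by blast
  have total: "\<exists>c. (y, c) \<in> G" for y
    using norm_dominated_graph_extend[OF G(1), of y] maximal by blast
  define p where "p y = (THE c. (y, c) \<in> G)" for y
  have p_mem: "(y, p y) \<in> G" for y
  proof -
    have "\<exists>!c. (y, c) \<in> G"
      using total[of y] norm_dominated_graph_unique[OF G(1)] by blast
    then show ?thesis
      unfolding p_def by (rule theI')
  qed
  have p_eq: "p y = c" if "(y, c) \<in> G" for y c
    using norm_dominated_graph_unique[OF G(1) p_mem that] .
  have p_le: "\<bar>p u\<bar> \<le> norm u" for u
    using norm_dominated_graph_le[OF G(1) p_mem[of u]]
      norm_dominated_graph_le[OF G(1) norm_dominated_graph_scaleR[OF G(1) p_mem[of u], of "-1"]]
    by simp
  have "bounded_linear p"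
    by (rule bounded_linear_intro[where K = 1])
      (use p_eq norm_dominated_graph_add[OF G(1) p_mem p_mem]
        norm_dominated_graph_scaleR[OF G(1) p_mem] p_le in auto)
  then have "norm (Blinfun p) \<le> 1" "blinfun_apply (Blinfun p) x = norm x"
    using p_le p_eq[OF G(2)] by (auto simp: bounded_linear_Blinfun_apply intro: norm_blinfun_bound)
  then show ?thesis
    by blast
qed

lemma dual_separates_points:
  fixes x y :: "'a::real_normed_vector"
  assumes "\<And>\<phi> :: 'a \<Rightarrow>\<^sub>L real. blinfun_apply \<phi> x = blinfun_apply \<phi> y"
  shows "x = y"
proof -
  obtain \<phi> :: "'a \<Rightarrow>\<^sub>L real" where "blinfun_apply \<phi> (x - y) = norm (x - y)"
    using norming_functional_exists by blast
  then show ?thesis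
    using assms[of \<phi>] by (simp add: blinfun.diff_right)
qed

section \<open>The weak topology\<close>

lemma topspace_weak_topology [simp]: "topspace (weak_topology :: 'a::real_normed_vector topology) = UNIV"
proof -
  have "UNIV \<in> {blinfun_apply \<phi> -` U | (\<phi> :: 'a \<Rightarrow>\<^sub>L real) U. open U}"
    by (intro CollectI exI[of _ 0] exI[of _ UNIV]) auto
  then show ?thesis
    unfolding weak_topology_def topology_generated_by_topspace by blast
qed

lemma openin_weak_topology_vimage:
  "open U \<Longrightarrow> openin weak_topology (blinfun_apply (\<phi> :: 'a::real_normed_vector \<Rightarrow>\<^sub>L real) -` U)"
  unfolding weak_topology_def by (rule topology_generated_by_Basis) blast

lemma continuous_map_into_weak_topology:
  fixes T :: "'b \<Rightarrow> 'a::real_normed_vector"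
  assumes "\<And>\<phi> :: 'a \<Rightarrow>\<^sub>L real. continuous_map X euclideanreal (\<lambda>x. blinfun_apply \<phi> (T x))"
  shows "continuous_map X weak_topology T"
  unfolding weak_topology_def
proof (rule continuous_on_generated_topo)
  fix U assume "U \<in> {blinfun_apply \<phi> -` V | (\<phi> :: 'a \<Rightarrow>\<^sub>L real) V. open V}"
  then obtain \<phi> :: "'a \<Rightarrow>\<^sub>L real" and V where "U = blinfun_apply \<phi> -` V" "open V"
    by blast
  moreover have "openin X {x \<in> topspace X. blinfun_apply \<phi> (T x) \<in> V}"
    by (rule openin_continuous_map_preimage[OF assms]) (simp add: \<open>open V\<close>)
  ultimately show "openin X (T -` U \<inter> topspace X)"
    by (simp add: Int_commute Collect_conj_eq vimage_def)
next
  show "T ` topspace X \<subseteq> \<Union> {blinfun_apply \<phi> -` V | (\<phi> :: 'a \<Rightarrow>\<^sub>L real) V. open V}"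
    using topspace_weak_topology[where 'a = 'a]
    unfolding weak_topology_def topology_generated_by_topspace by simp
qed

lemma weakly_lsc_iff_openin:
  "weakly_lsc f \<longleftrightarrow> (\<forall>c. openin weak_topology {x. c < f x})"
proof -
  have "{x. c < f x} = UNIV - {x. f x \<le> c}" for c
    by auto
  then show ?thesis
    unfolding weakly_lsc_def closedin_def by simp
qed

lemma weakly_lsc_add:
  assumes "weakly_lsc f" "weakly_lsc h"
  shows "weakly_lsc (\<lambda>x. f x + h x)"
  unfolding weakly_lsc_iff_openin
proof
  fix c
  have "{x. c < f x + h x} = (\<Union>a. {x. a < f x} \<inter> {x. c - a < h x})"
  proof safe
    fix x assume "c < f x + h x"
    then have "x \<in> {y. (f x + c - h x) / 2 < f y} \<inter> {y. c - (f x + c - h x) / 2 < h y}"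
      by (simp add: field_simps)
    then show "x \<in> (\<Union>a. {x. a < f x} \<inter> {x. c - a < h x})"
      by blast
  qed auto
  moreover have "openin weak_topology (\<Union>a. {x. a < f x} \<inter> {x. c - a < h x})"
    using assms unfolding weakly_lsc_iff_openin by (intro openin_Union) auto
  ultimately show "openin weak_topology {x. c < f x + h x}"
    by simp
qed

text \<open>Closed balls are intersections of closed half-spaces, by Hahn--Banach.\<close>
lemma closedin_weak_topology_cball: "closedin weak_topology (cball (c::'a::real_normed_vector) r)"
proof -
  have "UNIV - cball c r = (\<Union>\<phi>\<in>{\<phi>. norm \<phi> \<le> 1}. {x. r + blinfun_apply \<phi> c < blinfun_apply \<phi> x})"
  proof safe
    fix x assume "x \<notin> cball c r"
    moreover obtain \<phi> :: "'a \<Rightarrow>\<^sub>L real" where "norm \<phi> \<le> 1" "blinfun_apply \<phi> (x - c) = norm (x - c)"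
      using norming_functional_exists by blast
    ultimately show "x \<in> (\<Union>\<phi>\<in>{\<phi>. norm \<phi> \<le> 1}. {x. r + blinfun_apply \<phi> c < blinfun_apply \<phi> x})"
      by (auto simp: dist_norm norm_minus_commute blinfun.diff_right)
  next
    fix x and \<phi> :: "'a \<Rightarrow>\<^sub>L real"
    assume "norm \<phi> \<le> 1" "r + blinfun_apply \<phi> c < blinfun_apply \<phi> x" "x \<in> cball c r"
    have "blinfun_apply \<phi> (x - c) \<le> norm \<phi> * norm (x - c)"
      using norm_blinfun[of \<phi> "x - c"] by simp
    also have "\<dots> \<le> 1 * r"
      using \<open>norm \<phi> \<le> 1\<close> \<open>x \<in> cball c r\<close>
      by (intro mult_mono) (auto simp: dist_norm norm_minus_commute)
    finally show False
      using \<open>r + blinfun_apply \<phi> c < blinfun_apply \<phi> x\<close> by (simp add: blinfun.diff_right)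
  qed auto
  moreover have "openin weak_topology (\<Union>\<phi>\<in>{\<phi>. norm \<phi> \<le> 1}. {x. r + blinfun_apply \<phi> c < blinfun_apply \<phi> x})"
    using openin_weak_topology_vimage[of "{r + _ <..}"] by (intro openin_Union) (auto simp: vimage_def)
  ultimately show ?thesis
    by (simp add: closedin_def)
qed

lemma weakly_lsc_norm_diff: "weakly_lsc (\<lambda>x::'a::real_normed_vector. norm (x - c))"
  unfolding weakly_lsc_def
proof
  fix a
  show "closedin weak_topology {x. norm (x - c) \<le> a}"
  proof (cases "a < 0")
    case True
    then have "{x. norm (x - c) \<le> a} = {}"
      by (auto simp: not_le intro: order.strict_trans2[OF _ norm_ge_zero])
    then show ?thesis
      by simp
  next
    case False
    have "{x. norm (x - c) \<le> a} = cball c a"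
      by (auto simp: dist_norm norm_minus_commute)
    then show ?thesis
      using closedin_weak_topology_cball by simp
  qed
qed

lemma weakly_lsc_scaled_square:
  assumes "weakly_lsc N" "\<And>x. N x \<ge> 0" "\<rho> > 0"
  shows "weakly_lsc (\<lambda>x. \<rho> * N x ^ 2)"
  unfolding weakly_lsc_def
proof
  fix a
  show "closedin weak_topology {x. \<rho> * N x ^ 2 \<le> a}"
  proof (cases "a < 0")
    case True
    then have "{x. \<rho> * N x ^ 2 \<le> a} = {}"
      using assms(3) by (auto simp: not_le intro: order.strict_trans2[OF _ mult_nonneg_nonneg])
    then show ?thesis
      by simp
  next
    case False
    have "\<rho> * N x ^ 2 \<le> a \<longleftrightarrow> N x ^ 2 \<le> a / \<rho>" for x
      using assms(3) by (simp add: pos_le_divide_eq mult.commute)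
    also have "N x ^ 2 \<le> a / \<rho> \<longleftrightarrow> N x \<le> sqrt (a / \<rho>)" for x
      using real_sqrt_le_iff[of "N x ^ 2" "a / \<rho>"] assms(2)[of x] by simp
    finally show ?thesis
      using assms(1) unfolding weakly_lsc_def by simp
  qed
qed

lemma weakly_lsc_attains_min:
  assumes "compactin weak_topology S" "S \<noteq> {}" "weakly_lsc f"
  shows "\<exists>x\<in>S. \<forall>y\<in>S. f x \<le> f y"
proof (rule ccontr)
  let ?U = "(\<lambda>y. {x. f y < f x}) ` S"
  assume "\<not> ?thesis"
  then have "S \<subseteq> \<Union>?U"
    by (auto simp: not_le)
  moreover have "\<forall>U\<in>?U. openin weak_topology U"
    using assms(3) unfolding weakly_lsc_iff_openin by blast
  ultimately obtain F where F: "finite F" "F \<subseteq> ?U" "S \<subseteq> \<Union>F"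
    using assms(1) unfolding compactin_def by meson
  then obtain T where T: "T \<subseteq> S" "finite T" "F = (\<lambda>y. {x. f y < f x}) ` T"
    by (meson finite_subset_image)
  have "T \<noteq> {}"
  proof
    assume "T = {}"
    then show False
      using T(3) F(3) assms(2) by simp
  qed
  define y0 where "y0 = arg_min_on f T"
  have "y0 \<in> T"
    unfolding y0_def using arg_min_if_finite(1)[OF T(2) \<open>T \<noteq> {}\<close>] .
  then obtain y where "y \<in> T" "f y < f y0"
    using T(1,3) F(3) by blast
  moreover have "f y0 \<le> f y"
    unfolding y0_def using arg_min_least[OF T(2) \<open>T \<noteq> {}\<close> \<open>y \<in> T\<close>] .
  ultimately show False
    by simp
qed

lemma weakly_lsc_closure_of_le:
  assumes "weakly_lsc h" "x \<in> weak_topology closure_of A" "\<And>y. y \<in> A \<Longrightarrow> h y \<le> c"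
  shows "h x \<le> c"
proof -
  have "weak_topology closure_of A \<subseteq> {y. h y \<le> c}"
    using assms(1,3) unfolding weakly_lsc_def by (intro closure_of_minimal) auto
  then show ?thesis
    using assms(2) by blast
qed

lemma compactin_decseq_closure_of:
  assumes C: "compactin X C" and "decseq A" "\<And>n. A n \<noteq> {}" "\<And>n. A n \<subseteq> C"
  shows "\<exists>x\<in>C. \<forall>n. x \<in> X closure_of A n"
proof -
  let ?U = "range (\<lambda>n. X closure_of A n)"
  have fip: "C \<inter> \<Inter>F \<noteq> {}" if F: "finite F" "F \<subseteq> ?U" for F
  proof -
    obtain T where T: "finite T" "F = (\<lambda>n. X closure_of A n) ` T"
      using finite_subset_image[OF F] by blast
    define N where "N = Max (insert 0 T)"
    have "A N \<subseteq> X closure_of A n" if "n \<in> T" for n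
    proof -
      have "A N \<subseteq> A n"
        using \<open>decseq A\<close> that T(1) unfolding N_def decseq_def by simp
      also have "A n \<subseteq> X closure_of A n"
        using assms(4) compactin_subset_topspace[OF C] by (intro closure_of_subset) blast
      finally show ?thesis .
    qed
    then have "A N \<subseteq> C \<inter> \<Inter>F"
      using T(2) assms(4) by blast
    then show ?thesis
      using assms(3) by blast
  qed
  have "C \<inter> \<Inter>?U \<noteq> {}"
    using conjunct2[OF C[unfolded compactin_fip], rule_format, of ?U] fip by simp
  then show ?thesis
    by blast
qed

text \<open>The closed ball of radius \<open>R\<close> in \<open>X**\<close>, its elements taken as plain functions on \<open>X*\<close>
  so that the weak* topology is the product topology.\<close>
definition bidual_ball :: "real \<Rightarrow> (('a::real_normed_vector \<Rightarrow>\<^sub>L real) \<Rightarrow> real) set" where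
  "bidual_ball R = {\<Phi>. (\<forall>\<phi> \<psi>. \<Phi> (\<phi> + \<psi>) = \<Phi> \<phi> + \<Phi> \<psi>) \<and>
     (\<forall>c \<phi>. \<Phi> (c *\<^sub>R \<phi>) = c * \<Phi> \<phi>) \<and> (\<forall>\<phi>. \<bar>\<Phi> \<phi>\<bar> \<le> R * norm \<phi>)}"

text \<open>Banach--Alaoglu, via Tychonoff.\<close>
lemma compactin_bidual_ball:
  "compactin (product_topology (\<lambda>_. euclideanreal) UNIV) (bidual_ball R)"
    (is "compactin ?P _")
proof (rule closed_compactin)
  show "compactin ?P (PiE UNIV (\<lambda>\<phi>. {- (R * norm \<phi>) .. R * norm \<phi>}))"
    by (simp add: compactin_PiE)
  show "bidual_ball R \<subseteq> PiE UNIV (\<lambda>\<phi>. {- (R * norm \<phi>) .. R * norm \<phi>})"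
    by (auto simp: bidual_ball_def abs_le_iff minus_le_iff)
  have proj: "continuous_map ?P euclideanreal (\<lambda>\<Phi>. \<Phi> \<phi>)" for \<phi>
    by (rule continuous_map_product_projection) simp
  have closed_eq: "closedin ?P {\<Phi>. h \<Phi> = k \<Phi>}"
    if "continuous_map ?P euclideanreal h" "continuous_map ?P euclideanreal k" for h k
    using closedin_continuous_map_preimage[OF continuous_map_diff[OF that], of "{0}"] by simp
  have closed_le: "closedin ?P {\<Phi>. h \<Phi> \<le> k \<Phi>}"
    if "continuous_map ?P euclideanreal h" "continuous_map ?P euclideanreal k" for h k
    using closedin_continuous_map_preimage[OF continuous_map_diff[OF that(2,1)], of "{0..}"] by simp
  have add: "closedin ?P {\<Phi>. \<Phi> (\<phi> + \<psi>) = \<Phi> \<phi> + \<Phi> \<psi>}" for \<phi> \<psi>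
    by (intro closed_eq continuous_map_add proj)
  have scale: "closedin ?P {\<Phi>. \<Phi> (c *\<^sub>R \<phi>) = c * \<Phi> \<phi>}" for c \<phi>
    by (intro closed_eq continuous_map_real_mult_left proj)
  have bound: "closedin ?P {\<Phi>. \<bar>\<Phi> \<phi>\<bar> \<le> R * norm \<phi>}" for \<phi>
    by (intro closed_le continuous_map_real_abs proj) simp
  have "closedin ?P ((\<Inter>(\<phi>, \<psi>). {\<Phi>. \<Phi> (\<phi> + \<psi>) = \<Phi> \<phi> + \<Phi> \<psi>})
      \<inter> (\<Inter>(c, \<phi>). {\<Phi>. \<Phi> (c *\<^sub>R \<phi>) = c * \<Phi> \<phi>}) \<inter> (\<Inter>\<phi>. {\<Phi>. \<bar>\<Phi> \<phi>\<bar> \<le> R * norm \<phi>}))"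
    using add scale bound by (intro closedin_Int closedin_Inter) auto
  also have "\<dots> = bidual_ball R"
    unfolding bidual_ball_def by blast
  finally show "closedin ?P (bidual_ball R)" .
qed

lemma evaluation_in_bidual_ball:
  fixes x :: "'a::real_normed_vector"
  assumes "norm x \<le> R"
  shows "(\<lambda>\<phi> :: 'a \<Rightarrow>\<^sub>L real. blinfun_apply \<phi> x) \<in> bidual_ball R"
proof -
  have "\<bar>blinfun_apply \<phi> x\<bar> \<le> R * norm \<phi>" for \<phi> :: "'a \<Rightarrow>\<^sub>L real"
    using norm_blinfun[of \<phi> x] mult_left_mono[OF assms norm_ge_zero[of \<phi>]] by (simp add: mult.commute)
  then show ?thesis
    unfolding bidual_ball_def by (simp add: blinfun.add_left blinfun.scaleR_left)
qed

lemma reflexive_space_bidual_ball: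
  assumes "reflexive_space TYPE('a::real_normed_vector)" and "\<Phi> \<in> bidual_ball R"
  shows "\<exists>x::'a. \<forall>\<phi>. blinfun_apply \<phi> x = \<Phi> \<phi>"
proof -
  have "bounded_linear \<Phi>"
    using assms(2) unfolding bidual_ball_def
    by (intro bounded_linear_intro[where K = R]) (simp_all add: mult.commute)
  moreover obtain x :: 'a where "\<forall>\<phi>. blinfun_apply (Blinfun \<Phi>) \<phi> = blinfun_apply \<phi> x"
    using assms(1) unfolding reflexive_space_def by blast
  ultimately show ?thesis
    by (auto simp: bounded_linear_Blinfun_apply)
qed

text \<open>The ball is the image of a compact subset of \<open>X**\<close> under the inverse of the canonical
  embedding, which is weakly continuous.\<close>
lemma compactin_weak_topology_cball:
  assumes "reflexive_space TYPE('a::real_normed_vector)"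
  shows "compactin weak_topology (cball (c::'a) r)"
proof -
  define P :: "(('a \<Rightarrow>\<^sub>L real) \<Rightarrow> real) topology" where "P = product_topology (\<lambda>_. euclideanreal) UNIV"
  define K :: "(('a \<Rightarrow>\<^sub>L real) \<Rightarrow> real) set" where "K = bidual_ball (norm c + \<bar>r\<bar>)"
  define T where "T \<Phi> = (SOME x. \<forall>\<phi> :: 'a \<Rightarrow>\<^sub>L real. blinfun_apply \<phi> x = \<Phi> \<phi>)" for \<Phi>
  have T: "blinfun_apply \<phi> (T \<Phi>) = \<Phi> \<phi>" if "\<Phi> \<in> K" for \<Phi> \<phi>
    using reflexive_space_bidual_ball[OF assms that[unfolded K_def]]
    unfolding T_def by (rule someI_ex[THEN spec])
  have "continuous_map (subtopology P K) weak_topology T"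
  proof (rule continuous_map_into_weak_topology)
    fix \<phi> :: "'a \<Rightarrow>\<^sub>L real"
    have "continuous_map (subtopology P K) euclideanreal (\<lambda>\<Phi>. \<Phi> \<phi>)"
      unfolding P_def by (intro continuous_map_from_subtopology continuous_map_product_projection) simp
    then show "continuous_map (subtopology P K) euclideanreal (\<lambda>\<Phi>. blinfun_apply \<phi> (T \<Phi>))"
      by (rule continuous_map_eq) (simp add: T)
  qed
  moreover have "compactin P K"
    unfolding P_def K_def by (rule compactin_bidual_ball)
  ultimately have "compactin weak_topology (T ` K)"
    using image_compactin compactin_subtopology by blast
  moreover have "cball c r \<subseteq> T ` K"
  proof
    fix x assume "x \<in> cball c r"
    then have "norm x \<le> norm c + \<bar>r\<bar>"
      using norm_triangle_ineq[of c "x - c"] by (simp add: dist_norm norm_minus_commute)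
    then have "(\<lambda>\<phi>. blinfun_apply \<phi> x) \<in> K"
      unfolding K_def by (rule evaluation_in_bidual_ball)
    moreover from T[OF this] have "T (\<lambda>\<phi>. blinfun_apply \<phi> x) = x"
      by (rule dual_separates_points)
    ultimately show "x \<in> T ` K"
      by (metis image_eqI)
  qed
  ultimately show ?thesis
    using closedin_weak_topology_cball by (rule closed_compactin)
qed

section \<open>Square-integrable functions and the embedding\<close>

lemma sq_int_mult_integrable:
  assumes "sq_int M a" "sq_int M b"
  shows "integrable M (\<lambda>w. a w * b w)"
proof (rule Bochner_Integration.integrable_bound[where f = "\<lambda>w. (a w)\<^sup>2 + (b w)\<^sup>2"])
  show "integrable M (\<lambda>w. (a w)\<^sup>2 + (b w)\<^sup>2)" "(\<lambda>w. a w * b w) \<in> borel_measurable M"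
    using assms unfolding sq_int_def by auto
  have "\<bar>a w * b w\<bar> \<le> (a w)\<^sup>2 + (b w)\<^sup>2" for w
  proof -
    have "2 * \<bar>a w\<bar> * \<bar>b w\<bar> \<le> (a w)\<^sup>2 + (b w)\<^sup>2"
      using sum_squares_bound[of "\<bar>a w\<bar>" "\<bar>b w\<bar>"] by simp
    then show ?thesis
      using mult_nonneg_nonneg[OF abs_ge_zero abs_ge_zero, of "a w" "b w"] unfolding abs_mult by linarith
  qed
  then show "AE w in M. norm (a w * b w) \<le> norm ((a w)\<^sup>2 + (b w)\<^sup>2)"
    by simp
qed

lemma sq_int_pos_part: "sq_int M a \<Longrightarrow> sq_int M (pos_part a)"
  unfolding sq_int_def pos_part_def
  by (auto intro: Bochner_Integration.integrable_bound[where f = "\<lambda>w. (a w)\<^sup>2"] simp: max_def)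

lemma sq_int_cmult: "sq_int M a \<Longrightarrow> sq_int M (\<lambda>w. c * a w)"
  unfolding sq_int_def by (auto simp: power_mult_distrib)

lemma sq_int_diff:
  assumes "sq_int M a" "sq_int M b"
  shows "sq_int M (\<lambda>w. a w - b w)"
proof -
  have "integrable M (\<lambda>w. (a w)\<^sup>2 + (b w)\<^sup>2 - 2 * (a w * b w))"
    using assms sq_int_mult_integrable[OF assms] unfolding sq_int_def by auto
  then show ?thesis
    using assms unfolding sq_int_def by (auto simp: power2_diff mult.assoc)
qed

lemma L2norm_nonneg: "L2norm M h \<ge> 0"
  unfolding L2norm_def by simp

lemma L2norm_power2: "L2norm M h ^ 2 = (LINT w|M. (h w)\<^sup>2)"
  unfolding L2norm_def by (simp add: integral_nonneg_AE)

lemma L2_Cauchy_Schwarz: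
  assumes a: "sq_int M a" and b: "sq_int M b"
  shows "\<bar>LINT w|M. a w * b w\<bar> \<le> L2norm M a * L2norm M b"
proof -
  have [measurable]: "a \<in> borel_measurable M" "b \<in> borel_measurable M"
    and ia: "integrable M (\<lambda>w. (a w)\<^sup>2)" and ib: "integrable M (\<lambda>w. (b w)\<^sup>2)"
    using assms unfolding sq_int_def by auto
  have iab: "integrable M (\<lambda>w. \<bar>a w * b w\<bar>)"
    using sq_int_mult_integrable[OF a b] by auto
  have "ennreal (LINT w|M. \<bar>a w * b w\<bar>) = (\<integral>\<^sup>+w. ennreal \<bar>a w\<bar> * ennreal \<bar>b w\<bar> \<partial>M)"
    using iab by (subst nn_integral_eq_integral[symmetric]) (auto simp: abs_mult ennreal_mult)
  then have "ennreal (LINT w|M. \<bar>a w * b w\<bar>) ^ 2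
      = (\<integral>\<^sup>+w. ennreal \<bar>a w\<bar> * ennreal \<bar>b w\<bar> \<partial>M) ^ 2"
    by simp
  also have "\<dots> \<le> (\<integral>\<^sup>+w. ennreal \<bar>a w\<bar> ^ 2 \<partial>M) * (\<integral>\<^sup>+w. ennreal \<bar>b w\<bar> ^ 2 \<partial>M)"
    by (rule Cauchy_Schwarz_nn_integral) auto
  also have "\<dots> = ennreal ((LINT w|M. (a w)\<^sup>2) * (LINT w|M. (b w)\<^sup>2))"
  proof -
    have "(\<integral>\<^sup>+w. ennreal \<bar>h w\<bar> ^ 2 \<partial>M) = ennreal (LINT w|M. (h w)\<^sup>2)"
      if "integrable M (\<lambda>w. (h w)\<^sup>2)" for h
    proof -
      have "(\<integral>\<^sup>+w. ennreal \<bar>h w\<bar> ^ 2 \<partial>M) = (\<integral>\<^sup>+w. ennreal ((h w)\<^sup>2) \<partial>M)"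
        by (intro nn_integral_cong) (metis abs_ge_zero ennreal_power power2_abs)
      also have "\<dots> = ennreal (LINT w|M. (h w)\<^sup>2)"
        using that by (intro nn_integral_eq_integral) auto
      finally show ?thesis .
    qed
    then show ?thesis
      using ia ib by (simp add: ennreal_mult integral_nonneg_AE)
  qed
  finally have "ennreal ((LINT w|M. \<bar>a w * b w\<bar>) ^ 2) \<le> ennreal ((LINT w|M. (a w)\<^sup>2) * (LINT w|M. (b w)\<^sup>2))"
    by (simp add: ennreal_power integral_nonneg_AE)
  then have "(LINT w|M. \<bar>a w * b w\<bar>) ^ 2 \<le> (LINT w|M. (a w)\<^sup>2) * (LINT w|M. (b w)\<^sup>2)"
    by (simp add: integral_nonneg_AE)
  then have "(LINT w|M. \<bar>a w * b w\<bar>) \<le> L2norm M a * L2norm M b"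
    unfolding L2norm_def by (simp add: real_le_rsqrt flip: real_sqrt_mult)
  then show ?thesis
    by (rule order_trans[OF integral_abs_bound])
qed

text \<open>The descent lemma for \<open>s \<mapsto> (s\<^sub>+)\<^sup>2/2\<close>, whose derivative \<open>s\<^sub>+\<close> is 1-Lipschitz.\<close>
lemma half_sq_max_zero_le:
  fixes a b :: real
  shows "(max a 0)\<^sup>2 / 2 - (max b 0)\<^sup>2 / 2 \<le> max b 0 * (a - b) + (a - b)\<^sup>2 / 2"
proof -
  have "(a - b)\<^sup>2 = a\<^sup>2 - 2 * (a * b) + b\<^sup>2" "b * (a - b) = a * b - b\<^sup>2"
    by (simp_all add: power2_diff power2_eq_square algebra_simps)
  then have identity: "b * (a - b) + (a - b)\<^sup>2 / 2 = a\<^sup>2 / 2 - b\<^sup>2 / 2"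
    by linarith
  show ?thesis
  proof (cases "b \<ge> 0")
    case True
    then show ?thesis
      using identity by (simp add: max_def)
  next
    case False
    have "(max a 0)\<^sup>2 \<le> \<bar>a - b\<bar>\<^sup>2"
      using False by (intro power_mono) auto
    with False show ?thesis
      by simp
  qed
qed

text \<open>\<open>e\<^sup>* z\<close>, through which the paper regards \<open>Z\<close> as a subspace of \<open>Y*\<close>; junk unless \<open>sq_int M z\<close>.\<close>
definition emb_adjoint :: "'w measure \<Rightarrow> ('y::real_normed_vector \<Rightarrow> 'w \<Rightarrow> real) \<Rightarrow> ('w \<Rightarrow> real) \<Rightarrow> 'y \<Rightarrow>\<^sub>L real" where
  "emb_adjoint M e z = Blinfun (\<lambda>y. LINT w|M. z w * e y w)"

context
  fixes M :: "'w measure" and e :: "'y::real_normed_vector \<Rightarrow> 'w \<Rightarrow> real"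
  assumes emb: "dense_L2_embedding M e"
begin

lemma sq_int_emb: "sq_int M (e y)"
  using emb unfolding dense_L2_embedding_def by (elim conjE allE) assumption

lemma borel_measurable_emb [measurable]: "e y \<in> borel_measurable M"
  using sq_int_emb unfolding sq_int_def by blast

lemma emb_add_AE: "AE w in M. e (y + y') w = e y w + e y' w"
  using emb unfolding dense_L2_embedding_def by (elim conjE allE) assumption

lemma emb_scaleR_AE: "AE w in M. e (c *\<^sub>R y) w = c * e y w"
  using emb unfolding dense_L2_embedding_def by (elim conjE allE) assumption

lemma emb_diff_AE: "AE w in M. e (y - y') w = e y w - e y' w"
  using emb_add_AE[of y "(-1) *\<^sub>R y'"] emb_scaleR_AE[of "-1" y'] by eventually_elim simp

lemma emb_bounded: "\<exists>C. \<forall>y. L2norm M (e y) \<le> C * norm y"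
  using emb unfolding dense_L2_embedding_def by (elim conjE allE) assumption

lemma emb_adjoint_apply:
  assumes z: "sq_int M z"
  shows "blinfun_apply (emb_adjoint M e z) y = (LINT w|M. z w * e y w)"
proof -
  obtain C where C: "\<And>y. L2norm M (e y) \<le> C * norm y"
    using emb_bounded by blast
  have [measurable]: "z \<in> borel_measurable M"
    using z unfolding sq_int_def by blast
  have "bounded_linear (\<lambda>y. LINT w|M. z w * e y w)"
  proof (rule bounded_linear_intro[where K = "L2norm M z * C"])
    fix y y'
    have "AE w in M. z w * e (y + y') w = z w * e y w + z w * e y' w"
      using emb_add_AE[of y y'] by eventually_elim (simp add: distrib_left)
    then have "(LINT w|M. z w * e (y + y') w) = (LINT w|M. z w * e y w + z w * e y' w)"
      by (rule integral_cong_AE[rotated 2]; measurable)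
    then show "(LINT w|M. z w * e (y + y') w) = (LINT w|M. z w * e y w) + (LINT w|M. z w * e y' w)"
      by (simp add: sq_int_mult_integrable z sq_int_emb)
  next
    fix c y
    have "AE w in M. z w * e (c *\<^sub>R y) w = c * (z w * e y w)"
      using emb_scaleR_AE[of c y] by eventually_elim simp
    then have "(LINT w|M. z w * e (c *\<^sub>R y) w) = (LINT w|M. c * (z w * e y w))"
      by (rule integral_cong_AE[rotated 2]; measurable)
    then show "(LINT w|M. z w * e (c *\<^sub>R y) w) = c *\<^sub>R (LINT w|M. z w * e y w)"
      by simp
  next
    fix y
    have "\<bar>LINT w|M. z w * e y w\<bar> \<le> L2norm M z * L2norm M (e y)"
      by (rule L2_Cauchy_Schwarz[OF z sq_int_emb])
    also have "\<dots> \<le> L2norm M z * (C * norm y)"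
      by (intro mult_left_mono C L2norm_nonneg)
    finally show "norm (LINT w|M. z w * e y w) \<le> norm y * (L2norm M z * C)"
      by (simp add: algebra_simps)
  qed
  then show ?thesis
    unfolding emb_adjoint_def by (simp add: bounded_linear_Blinfun_apply)
qed

lemma emb_adjoint_dual_cone:
  assumes "sq_int M z" "AE w in M. z w \<ge> 0"
  shows "emb_adjoint M e z \<in> dual_cone_KY M e"
  unfolding dual_cone_KY_def cone_KY_def
proof (intro CollectI ballI)
  fix y assume "y \<in> {y. AE w in M. e y w \<ge> 0}"
  then have "AE w in M. e y w \<ge> 0"
    by simp
  with assms(2) have "AE w in M. 0 \<le> z w * e y w"
    by eventually_elim simp
  then show "0 \<le> blinfun_apply (emb_adjoint M e z) y"
    unfolding emb_adjoint_apply[OF assms(1)] by (rule integral_nonneg_AE)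
qed

lemma penalty_multiplier:
  assumes "\<rho> \<ge> 0"
  shows "sq_int M (\<lambda>w. \<rho> * pos_part (e y) w)"
    and "emb_adjoint M e (\<lambda>w. \<rho> * pos_part (e y) w) \<in> dual_cone_KY M e"
    and "(LINT w|M. \<rho> * pos_part (e y) w * neg_part (e y) w) = 0"
proof -
  show sq: "sq_int M (\<lambda>w. \<rho> * pos_part (e y) w)"
    by (intro sq_int_cmult sq_int_pos_part sq_int_emb)
  show "emb_adjoint M e (\<lambda>w. \<rho> * pos_part (e y) w) \<in> dual_cone_KY M e"
    using assms by (intro emb_adjoint_dual_cone[OF sq] AE_I2) (simp add: pos_part_def)
  have "(\<lambda>w. \<rho> * pos_part (e y) w * neg_part (e y) w) = (\<lambda>w. 0)"
    by (simp add: fun_eq_iff pos_part_def neg_part_def max_def)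
  then show "(LINT w|M. \<rho> * pos_part (e y) w * neg_part (e y) w) = 0"
    by simp
qed

lemma L2norm_pos_part_eq_0_iff: "L2norm M (pos_part (e y)) = 0 \<longleftrightarrow> - y \<in> cone_KY M e"
proof -
  have "integrable M (\<lambda>w. (pos_part (e y) w)\<^sup>2)"
    using sq_int_pos_part[OF sq_int_emb] unfolding sq_int_def by blast
  have "L2norm M (pos_part (e y)) = 0 \<longleftrightarrow> (LINT w|M. (pos_part (e y) w)\<^sup>2) = 0"
    unfolding L2norm_def by simp
  also have "\<dots> \<longleftrightarrow> (AE w in M. (pos_part (e y) w)\<^sup>2 = 0)"
    by (rule integral_nonneg_eq_0_iff_AE) (use \<open>integrable M _\<close> in auto)
  also have "\<dots> \<longleftrightarrow> (AE w in M. e y w \<le> 0)"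
    by (intro AE_cong) (auto simp: pos_part_def max_def)
  also have "\<dots> \<longleftrightarrow> (AE w in M. e (- y) w \<ge> 0)"
  proof -
    have "AE w in M. e (- y) w = - e y w"
      using emb_scaleR_AE[of "-1" y] by simp
    then show ?thesis
      by (auto elim: AE_mp)
  qed
  finally show ?thesis
    unfolding cone_KY_def by simp
qed

lemma L2norm_pos_part_descent:
  assumes C: "\<And>y. L2norm M (e y) \<le> C * norm y"
  shows "L2norm M (pos_part (e y')) ^ 2 / 2 - L2norm M (pos_part (e y)) ^ 2 / 2
    \<le> (LINT w|M. pos_part (e y) w * e y' w) - (LINT w|M. pos_part (e y) w * e y w) + (C * norm (y' - y))\<^sup>2 / 2"
proof -
  let ?p = "pos_part (e y)" and ?q = "pos_part (e y')" and ?d = "\<lambda>w. e y' w - e y w"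
  have "sq_int M ?p" "sq_int M ?q" "sq_int M ?d"
    by (intro sq_int_pos_part sq_int_diff sq_int_emb)+
  then have int: "integrable M (\<lambda>w. (?p w)\<^sup>2)" "integrable M (\<lambda>w. (?q w)\<^sup>2)" "integrable M (\<lambda>w. (?d w)\<^sup>2)"
    "integrable M (\<lambda>w. ?p w * e y' w)" "integrable M (\<lambda>w. ?p w * e y w)"
    unfolding sq_int_def by (blast intro: sq_int_mult_integrable sq_int_emb \<open>sq_int M ?p\<close>)+
  have d_AE: "AE w in M. (?d w)\<^sup>2 = (e (y' - y) w)\<^sup>2"
    using emb_diff_AE[of y' y] by eventually_elim simp
  have "L2norm M ?q ^ 2 / 2 - L2norm M ?p ^ 2 / 2 = (LINT w|M. (?q w)\<^sup>2 / 2 - (?p w)\<^sup>2 / 2)"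
    using int unfolding L2norm_power2 by simp
  also have "\<dots> \<le> (LINT w|M. (?p w * e y' w - ?p w * e y w) + (?d w)\<^sup>2 / 2)"
    using int half_sq_max_zero_le[of "e y' w" "e y w" for w]
    by (intro integral_mono) (auto simp: pos_part_def algebra_simps)
  also have "\<dots> = (LINT w|M. ?p w * e y' w) - (LINT w|M. ?p w * e y w) + (LINT w|M. (?d w)\<^sup>2) / 2"
    using int by simp
  also have "(LINT w|M. (?d w)\<^sup>2) = L2norm M (e (y' - y)) ^ 2"
    unfolding L2norm_power2 using d_AE by (rule integral_cong_AE[rotated 2]; measurable)
  also have "\<dots> \<le> (C * norm (y' - y))\<^sup>2"
    using C[of "y' - y"] L2norm_nonneg by (intro power_mono) auto
  finally show ?thesis
    by simp
qed

end

section \<open>First-order conditions\<close>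

lemma has_derivative_difference_quotient_at_right:
  fixes \<phi> :: "'a::real_normed_vector \<Rightarrow> real"
  assumes "(\<phi> has_derivative D) (at x)"
  shows "((\<lambda>t. (\<phi> (x + t *\<^sub>R v) - \<phi> x) / t) \<longlongrightarrow> D v) (at_right 0)"
proof -
  have "((\<lambda>t. x + t *\<^sub>R v) has_derivative (\<lambda>t. t *\<^sub>R v)) (at 0)"
    by (auto intro!: derivative_eq_intros)
  then have "((\<lambda>t. \<phi> (x + t *\<^sub>R v)) has_derivative (\<lambda>t. D (t *\<^sub>R v))) (at 0)"
    by (rule has_derivative_compose) (use assms in simp)
  moreover have "(\<lambda>t. D (t *\<^sub>R v)) = (*) (D v)"
    using has_derivative_bounded_linear[OF assms] by (simp add: fun_eq_iff linear_simps mult.commute)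
  ultimately have "((\<lambda>t. \<phi> (x + t *\<^sub>R v)) has_field_derivative D v) (at 0)"
    by (simp add: has_field_derivative_def mult.commute)
  then have "((\<lambda>t. (\<phi> (x + t *\<^sub>R v) - \<phi> x) / t) \<longlongrightarrow> D v) (at 0)"
    by (simp add: DERIV_def)
  then show ?thesis
    by (simp add: filterlim_at_split)
qed

lemma half_norm_sq_diff_le:
  "norm (y - z) ^ 2 / 2 - norm (x - z) ^ 2 / 2 \<le> norm (x - z) * norm (y - x) + norm (y - x) ^ 2 / 2"
proof -
  have "norm (y - z) \<le> norm (x - z) + norm (y - x)"
    using norm_triangle_ineq[of "x - z" "y - x"] by simp
  then have "norm (y - z) ^ 2 \<le> (norm (x - z) + norm (y - x)) ^ 2"
    by (intro power_mono) auto
  then show ?thesis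
    by (simp add: power2_sum)
qed

text \<open>The slack \<open>d \<parallel>y - x\<parallel>\<close> accommodates the proximal term, as the norm need not be differentiable.\<close>
lemma norm_derivative_le_of_local_min:
  fixes \<phi> :: "'a::real_normed_vector \<Rightarrow> real"
  assumes deriv: "(\<phi> has_derivative blinfun_apply D) (at x)"
    and min: "\<forall>\<^sub>F y in nhds x. \<phi> x \<le> \<phi> y + d * norm (y - x) + K * norm (y - x) ^ 2"
    and "d \<ge> 0"
  shows "norm D \<le> d"
proof (rule norm_blinfun_bound[OF \<open>d \<ge> 0\<close>])
  have lower: "- (d * norm v) \<le> blinfun_apply D v" for v
  proof -
    have "((\<lambda>t. x + t *\<^sub>R v) \<longlongrightarrow> x + 0 *\<^sub>R v) (at_right 0)"
      by (intro tendsto_intros)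
    then have "filterlim (\<lambda>t. x + t *\<^sub>R v) (nhds x) (at_right 0)"
      by simp
    from eventually_compose_filterlim[OF min this]
    have "\<forall>\<^sub>F t in at_right 0. \<phi> x \<le> \<phi> (x + t *\<^sub>R v) + d * (\<bar>t\<bar> * norm v) + K * (\<bar>t\<bar> * norm v) ^ 2"
      by simp
    moreover have "\<forall>\<^sub>F t in at_right (0::real). t > 0"
      by (simp add: eventually_at_right_less)
    ultimately have "\<forall>\<^sub>F t in at_right 0.
        - (d * norm v) - K * t * norm v ^ 2 \<le> (\<phi> (x + t *\<^sub>R v) - \<phi> x) / t"
    proof eventually_elim
      case (elim t)
      then have "t * (- (d * norm v) - K * t * norm v ^ 2) \<le> \<phi> (x + t *\<^sub>R v) - \<phi> x"
        by (simp add: power_mult_distrib power2_eq_square algebra_simps)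
      with \<open>t > 0\<close> show ?case
        by (simp add: pos_le_divide_eq mult.commute)
    qed
    moreover have "((\<lambda>t. - (d * norm v) - K * t * norm v ^ 2) \<longlongrightarrow> - (d * norm v) - K * 0 * norm v ^ 2) (at_right 0)"
      by (intro tendsto_intros)
    ultimately show ?thesis
      using has_derivative_difference_quotient_at_right[OF deriv, of v]
      by (simp add: tendsto_le[OF trivial_limit_at_right_real])
  qed
  show "norm (blinfun_apply D v) \<le> d * norm v" for v
    using lower[of v] lower[of "- v"] by (simp add: blinfun.minus_right abs_le_iff mult.commute)
qed

lemma norm_diff_le_of_has_derivative:
  assumes "(g has_derivative blinfun_apply G) (at x)"
  shows "\<forall>\<^sub>F y in nhds x. norm (g y - g x) \<le> (norm G + 1) * norm (y - x)"
proof -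
  obtain r where "r > 0" and r: "\<And>y. norm (y - x) < r \<Longrightarrow> norm (g y - g x - blinfun_apply G (y - x)) \<le> 1 * norm (y - x)"
    using assms unfolding has_derivative_at_alt by (meson zero_less_one)
  have "norm (g y - g x) \<le> (norm G + 1) * norm (y - x)" if "norm (y - x) < r" for y
  proof -
    have "norm (g y - g x) \<le> norm (g y - g x - blinfun_apply G (y - x)) + norm (blinfun_apply G (y - x))"
      using norm_triangle_ineq[of "g y - g x - blinfun_apply G (y - x)" "blinfun_apply G (y - x)"] by simp
    also have "\<dots> \<le> norm (y - x) + norm G * norm (y - x)"
      using r[OF that] norm_blinfun[of G "y - x"] by simp
    finally show ?thesis
      by (simp add: algebra_simps)
  qed
  then show ?thesis
    unfolding eventually_nhds_metric using \<open>r > 0\<close> by (auto simp: dist_norm)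
qed

section \<open>The penalty method\<close>

text \<open>\<open>N\<close> stands for \<open>\<parallel>g\<^sub>+\<parallel>\<close>; the proximal term makes the minimizers converge to \<open>xb\<close> rather
  than to another local solution.\<close>
definition penalized :: "('a::real_normed_vector \<Rightarrow> real) \<Rightarrow> ('a \<Rightarrow> real) \<Rightarrow> real \<Rightarrow> 'a \<Rightarrow> 'a \<Rightarrow> real" where
  "penalized f N \<rho> xb x = f x + \<rho> / 2 * N x ^ 2 + norm (x - xb) ^ 2 / 2"

lemma weakly_lsc_penalized:
  assumes "weakly_lsc f" "weakly_lsc N" "\<And>x. N x \<ge> 0" "\<rho> > 0"
  shows "weakly_lsc (penalized f N \<rho> xb)"
proof -
  have "weakly_lsc (\<lambda>x. 1 / 2 * norm (x - xb) ^ 2)"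
    by (rule weakly_lsc_scaled_square[OF weakly_lsc_norm_diff]) auto
  moreover have "weakly_lsc (\<lambda>x. \<rho> / 2 * N x ^ 2)"
    using weakly_lsc_scaled_square[OF assms(2,3), of "\<rho> / 2"] assms(4) by simp
  ultimately show ?thesis
    unfolding penalized_def using assms(1) by (simp add: weakly_lsc_add)
qed

lemma penalty_cluster_point_feasible:
  assumes N: "weakly_lsc N" "\<And>x. N x \<ge> 0"
    and bound: "\<And>k. real (Suc k) / 2 * N (xs k) ^ 2 \<le> B"
    and x: "\<And>n. x \<in> weak_topology closure_of (xs ` {k \<in> I. n \<le> k})"
  shows "N x = 0"
proof -
  have "N x \<le> c" if "c > 0" for c
  proof (rule weakly_lsc_closure_of_le[OF N(1) x])
    fix y assume "y \<in> xs ` {k \<in> I. nat \<lceil>2 * B / c\<^sup>2\<rceil> \<le> k}"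
    then obtain k where "y = xs k" and "2 * B / c\<^sup>2 \<le> real (Suc k)"
      by (auto simp: nat_le_iff ceiling_le_iff)
    then have "real (Suc k) * N y ^ 2 \<le> real (Suc k) * c\<^sup>2"
      using bound[of k] \<open>c > 0\<close> by (simp add: pos_divide_le_eq field_simps)
    then have "N y ^ 2 \<le> c\<^sup>2"
      by (simp only: mult_le_cancel_left_pos of_nat_0_less_iff zero_less_Suc)
    then show "N y \<le> c"
      by (rule power2_le_imp_le) (use \<open>c > 0\<close> in simp)
  qed
  from this[of "N x / 2"] show ?thesis
    using N(2)[of x] by linarith
qed

text \<open>A weak cluster point of iterates staying \<open>\<delta>\<close> away from \<open>xb\<close> would be feasible, since the
  penalty forces \<open>N\<close> to \<open>0\<close>, and yet better than \<open>xb\<close> by \<open>\<delta>\<^sup>2/2\<close>.\<close>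
lemma penalty_minimizers_tendsto:
  fixes f N :: "'a::real_normed_vector \<Rightarrow> real"
  assumes C: "compactin weak_topology C" and xs_C: "\<And>k. xs k \<in> C"
    and f: "weakly_lsc f" and N: "weakly_lsc N" "\<And>x. N x \<ge> 0"
    and opt: "\<And>x. x \<in> C \<Longrightarrow> N x = 0 \<Longrightarrow> f xb \<le> f x"
    and bound: "\<And>k. penalized f N (Suc k) xb (xs k) \<le> f xb"
  shows "xs \<longlonglongrightarrow> xb"
  unfolding tendsto_iff
proof (intro allI impI)
  fix \<delta> :: real assume "\<delta> > 0"
  obtain m where m: "\<And>x. x \<in> C \<Longrightarrow> m \<le> f x"
    using weakly_lsc_attains_min[OF C _ f] xs_C by blast
  have N_bound: "real (Suc k) / 2 * N (xs k) ^ 2 \<le> f xb - m" for k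
    using bound[of k] m[OF xs_C[of k]] zero_le_power2[of "norm (xs k - xb)"]
    unfolding penalized_def by linarith
  have f_bound: "f (xs k) \<le> f xb - norm (xs k - xb) ^ 2 / 2" for k
    using bound[of k] zero_le_power2[of "N (xs k)"] mult_nonneg_nonneg[of "real (Suc k) / 2" "N (xs k) ^ 2"]
    unfolding penalized_def by linarith
  show "\<forall>\<^sub>F k in sequentially. dist (xs k) xb < \<delta>"
  proof (rule ccontr)
    define I where "I = {k. \<delta> \<le> norm (xs k - xb)}"
    assume "\<not> (\<forall>\<^sub>F k in sequentially. dist (xs k) xb < \<delta>)"
    then have "xs ` {k \<in> I. n \<le> k} \<noteq> {}" for n
      unfolding eventually_sequentially I_def by (auto simp: dist_norm not_less)
    moreover have "decseq (\<lambda>n. xs ` {k \<in> I. n \<le> k})"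
      unfolding decseq_def by auto
    ultimately obtain x where "x \<in> C" and x: "\<And>n. x \<in> weak_topology closure_of (xs ` {k \<in> I. n \<le> k})"
      using compactin_decseq_closure_of[OF C] xs_C by blast
    have "f xb \<le> f x"
      using opt[OF \<open>x \<in> C\<close> penalty_cluster_point_feasible[OF N N_bound x]] .
    moreover have "f x \<le> f xb - \<delta>\<^sup>2 / 2"
    proof (rule weakly_lsc_closure_of_le[OF f x[of 0]])
      fix y assume "y \<in> xs ` {k \<in> I. 0 \<le> k}"
      then obtain k where "y = xs k" "\<delta> \<le> norm (xs k - xb)"
        unfolding I_def by blast
      moreover have "\<delta>\<^sup>2 \<le> norm (xs k - xb) ^ 2"
        using \<open>\<delta> > 0\<close> \<open>\<delta> \<le> norm (xs k - xb)\<close> by (intro power_mono) auto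
      ultimately show "f y \<le> f xb - \<delta>\<^sup>2 / 2"
        using f_bound[of k] by simp
    qed
    ultimately show False
      using zero_less_power[OF \<open>\<delta> > 0\<close>, of 2] by linarith
  qed
qed

lemma penalty_stationarity:
  assumes emb: "dense_L2_embedding M e"
    and f_deriv: "(f has_derivative blinfun_apply F) (at x)"
    and g_deriv: "(g has_derivative blinfun_apply G) (at x)"
    and "\<rho> \<ge> 0"
    and min: "\<forall>\<^sub>F y in nhds x. penalized f (\<lambda>x. L2norm M (pos_part (e (g x)))) \<rho> xb x
      \<le> penalized f (\<lambda>x. L2norm M (pos_part (e (g x)))) \<rho> xb y"
  shows "norm (F + (emb_adjoint M e (\<lambda>w. \<rho> * pos_part (e (g x)) w) o\<^sub>L G)) \<le> norm (x - xb)"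
proof -
  obtain C where C: "\<And>y. L2norm M (e y) \<le> C * norm y"
    using emb_bounded[OF emb] by blast
  define lam where "lam = emb_adjoint M e (\<lambda>w. \<rho> * pos_part (e (g x)) w)"
  define K where "K = \<rho> / 2 * C\<^sup>2 * (norm G + 1)\<^sup>2 + 1 / 2"
  have penalty: "\<rho> / 2 * L2norm M (pos_part (e y)) ^ 2 - \<rho> / 2 * L2norm M (pos_part (e (g x))) ^ 2
      \<le> lam y - lam (g x) + \<rho> / 2 * C\<^sup>2 * norm (y - g x) ^ 2" for y
  proof -
    have "lam y' = \<rho> * (LINT w|M. pos_part (e (g x)) w * e y' w)" for y'
      unfolding lam_def
      by (simp add: emb_adjoint_apply[OF emb] penalty_multiplier(1)[OF emb \<open>\<rho> \<ge> 0\<close>] mult.assoc)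
    then show ?thesis
      using mult_left_mono[OF L2norm_pos_part_descent[OF emb C, of y "g x"] \<open>\<rho> \<ge> 0\<close>]
      by (simp add: power_mult_distrib algebra_simps)
  qed
  have "((\<lambda>y. f y + lam (g y)) has_derivative (\<lambda>h. F h + lam (G h))) (at x)"
    using has_derivative_add[OF f_deriv bounded_linear.has_derivative[OF blinfun.bounded_linear_right g_deriv]] .
  then have deriv: "((\<lambda>y. f y + lam (g y)) has_derivative blinfun_apply (F + (lam o\<^sub>L G))) (at x)"
    by (rule has_derivative_eq_rhs) (simp add: fun_eq_iff blinfun.add_left)
  have "\<forall>\<^sub>F y in nhds x. f x + lam (g x) \<le> f y + lam (g y) + norm (x - xb) * norm (y - x) + K * norm (y - x) ^ 2"
    using min norm_diff_le_of_has_derivative[OF g_deriv]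
  proof eventually_elim
    case (elim y)
    have "\<rho> / 2 * C\<^sup>2 * norm (g y - g x) ^ 2 \<le> \<rho> / 2 * C\<^sup>2 * ((norm G + 1) * norm (y - x)) ^ 2"
      using elim(2) \<open>\<rho> \<ge> 0\<close> by (intro mult_left_mono power_mono) auto
    moreover have "K * norm (y - x) ^ 2 = \<rho> / 2 * C\<^sup>2 * ((norm G + 1) * norm (y - x)) ^ 2 + norm (y - x) ^ 2 / 2"
      unfolding K_def by (simp add: power2_eq_square algebra_simps)
    ultimately show ?case
      using elim(1) penalty[of "g y"] half_norm_sq_diff_le[of y xb x] unfolding penalized_def by linarith
  qed
  then show ?thesis
    using norm_derivative_le_of_local_min[OF deriv] unfolding lam_def by simp
qed

lemma penalty_local_minimizers:
  fixes f N :: "'a::real_normed_vector \<Rightarrow> real"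
  assumes refl: "reflexive_space TYPE('a)" and f: "weakly_lsc f" and N: "weakly_lsc N" "\<And>x. N x \<ge> 0"
    and "\<epsilon> > 0" and opt: "\<And>x. N x = 0 \<Longrightarrow> norm (x - xb) < \<epsilon> \<Longrightarrow> f xb \<le> f x" and "N xb = 0"
  obtains xs where "xs \<longlonglongrightarrow> xb"
    and "\<forall>\<^sub>F k in sequentially. \<forall>\<^sub>F y in nhds (xs k).
      penalized f N (Suc k) xb (xs k) \<le> penalized f N (Suc k) xb y"
proof -
  define C where "C = cball xb (\<epsilon> / 2)"
  have C: "compactin weak_topology C" "xb \<in> C"
    unfolding C_def using compactin_weak_topology_cball[OF refl] \<open>\<epsilon> > 0\<close> by auto
  have "weakly_lsc (penalized f N (Suc k) xb)" for k
    using weakly_lsc_penalized[OF f N] by simp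
  then have "\<exists>x\<in>C. \<forall>y\<in>C. penalized f N (Suc k) xb x \<le> penalized f N (Suc k) xb y" for k
    using weakly_lsc_attains_min[OF C(1)] C(2) by blast
  then obtain xs where xs_C: "\<And>k. xs k \<in> C"
    and xs_min: "\<And>k y. y \<in> C \<Longrightarrow> penalized f N (Suc k) xb (xs k) \<le> penalized f N (Suc k) xb y"
    by metis
  have "xs \<longlonglongrightarrow> xb"
  proof (rule penalty_minimizers_tendsto[OF C(1) xs_C f N])
    show "f xb \<le> f x" if "x \<in> C" "N x = 0" for x
      using opt that \<open>\<epsilon> > 0\<close> by (auto simp: C_def dist_norm norm_minus_commute)
    show "penalized f N (Suc k) xb (xs k) \<le> f xb" for k
      using xs_min[OF C(2), of k] \<open>N xb = 0\<close> by (simp add: penalized_def)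
  qed
  moreover have "\<forall>\<^sub>F k in sequentially. \<forall>\<^sub>F y in nhds (xs k).
      penalized f N (Suc k) xb (xs k) \<le> penalized f N (Suc k) xb y"
    using tendstoD[OF \<open>xs \<longlonglongrightarrow> xb\<close> half_gt_zero[OF \<open>\<epsilon> > 0\<close>]]
  proof eventually_elim
    case (elim k)
    then have "\<forall>\<^sub>F y in nhds (xs k). y \<in> ball xb (\<epsilon> / 2)"
      by (intro eventually_nhds_in_open) (auto simp: dist_commute)
    then show ?case
      by (rule eventually_mono) (rule xs_min, simp add: C_def)
  qed
  ultimately show ?thesis
    using that by blast
qed

theorem theorem5p3:
  fixes M :: "'w measure"
    and e :: "'y::banach \<Rightarrow> 'w \<Rightarrow> real"
    and f :: "'x::banach \<Rightarrow> real" and f' :: "'x \<Rightarrow> ('x \<Rightarrow>\<^sub>L real)"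
    and g :: "'x \<Rightarrow> 'y" and g' :: "'x \<Rightarrow> ('x \<Rightarrow>\<^sub>L 'y)"
    and xb :: 'x
  assumes refl: "reflexive_space TYPE('x)"
    and emb: "dense_L2_embedding M e"
    and f_deriv: "\<And>x. (f has_derivative blinfun_apply (f' x)) (at x)"
    and f'_cont: "continuous_on UNIV f'"
    and g_deriv: "\<And>x. (g has_derivative blinfun_apply (g' x)) (at x)"
    and g'_cont: "continuous_on UNIV g'"
    and f_wlsc: "weakly_lsc f"
    and gplus_wlsc: "weakly_lsc (\<lambda>x. L2norm M (pos_part (e (g x))))"
    and loc: "local_solution M e f g xb"
  shows "\<exists>(x :: nat \<Rightarrow> 'x) (z :: nat \<Rightarrow> 'w \<Rightarrow> real) (lam :: nat \<Rightarrow> ('y \<Rightarrow>\<^sub>L real)).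
           x \<longlonglongrightarrow> xb \<and>
           (\<forall>k. sq_int M (z k)) \<and>
           (\<forall>k y. blinfun_apply (lam k) y = (LINT w|M. z k w * e y w)) \<and>
           (\<forall>k. lam k \<in> dual_cone_KY M e) \<and>
           (\<lambda>k. f' (x k) + (lam k o\<^sub>L g' (x k))) \<longlonglongrightarrow> 0 \<and>
           (\<lambda>k. LINT w|M. z k w * neg_part (e (g (x k))) w) \<longlonglongrightarrow> 0"
proof -
  define N where "N x = L2norm M (pos_part (e (g x)))" for x
  obtain \<epsilon> where "\<epsilon> > 0" and opt: "\<And>x. - g x \<in> cone_KY M e \<Longrightarrow> norm (x - xb) < \<epsilon> \<Longrightarrow> f xb \<le> f x"
    and "- g xb \<in> cone_KY M e"
    using loc unfolding local_solution_def by blast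
  have N: "weakly_lsc N" "\<And>x. N x \<ge> 0" "\<And>x. N x = 0 \<longleftrightarrow> - g x \<in> cone_KY M e"
    using gplus_wlsc L2norm_nonneg L2norm_pos_part_eq_0_iff[OF emb] unfolding N_def by auto
  have "f xb \<le> f x" if "N x = 0" "norm (x - xb) < \<epsilon>" for x
    using opt N(3) that by blast
  moreover have "N xb = 0"
    using N(3) \<open>- g xb \<in> cone_KY M e\<close> by blast
  ultimately obtain xs where conv: "xs \<longlonglongrightarrow> xb"
    and min: "\<forall>\<^sub>F k in sequentially. \<forall>\<^sub>F y in nhds (xs k).
      penalized f N (Suc k) xb (xs k) \<le> penalized f N (Suc k) xb y"
    using penalty_local_minimizers[OF refl f_wlsc N(1,2) \<open>\<epsilon> > 0\<close>] by blast
  define z where "z k = (\<lambda>w. real (Suc k) * pos_part (e (g (xs k))) w)" for k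
  have "\<forall>\<^sub>F k in sequentially. norm (f' (xs k) + (emb_adjoint M e (z k) o\<^sub>L g' (xs k))) \<le> norm (xs k - xb)"
    using min unfolding z_def N_def
    by eventually_elim (rule penalty_stationarity[OF emb f_deriv g_deriv], simp_all)
  then have "(\<lambda>k. f' (xs k) + (emb_adjoint M e (z k) o\<^sub>L g' (xs k))) \<longlonglongrightarrow> 0"
    by (rule Lim_null_comparison) (use conv in \<open>simp add: LIM_zero tendsto_norm_zero\<close>)
  then show ?thesis
    using conv penalty_multiplier[OF emb]
    by (intro exI[of _ xs] exI[of _ z] exI[of _ "\<lambda>k. emb_adjoint M e (z k)"])
      (auto simp: z_def emb_adjoint_apply[OF emb])
qed

end
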